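(* Let $\mathcal K\subset S^D_+$ be compact and $\mathcal P^\uparrow(\mathcal K)=\mathcal P^\uparrow(S^D_+)\cap\mathcal P(\mathcal K)$. The closed convex hull of $\mathcal P^\uparrow(\mathcal K)$ in $(\mathcal P(\mathcal K),d)$ is $\mathcal P(\mathcal K)$, and $\mathcal P^\uparrow(\mathcal K)$ is an extreme set in $\mathcal P(\mathcal K)$: every Borel probability measure $\eta$ on $\mathcal P(\mathcal K)$ with $\mathrm{Bar}(\eta)\in\mathcal P^\uparrow(\mathcal K)$ is concentrated on $\mathcal P^\uparrow(\mathcal K)$.
   Context: $S^D_+$: positive semidefinite symmetric $D\times D$ matrices with Frobenius norm. $\mathcal P(\mathcal K)$: Borel probability measures on $\mathcal K$ with $1$-Wasserstein distance $d$. A probability measure on $S^D_+$ is monotone if it is the law of $\mathsf q(U)$, $U$ uniform on $[0,1)$, for some $\mathsf q:[0,1)\to S^D_+$ with $\mathsf q(v)-\mathsf q(u)\in S^D_+$ whenever $u\le v$; $\mathcal P^\uparrow(S^D_+)$ is the set of such measures. For a Borel probability measure $\eta$ on $(\mathcal P(\mathcal K),d)$, $\mathrm{Bar}(\eta)\in\mathcal P(\mathcal K)$ is defined by $\mathrm{Bar}(\eta)(A)=\int\nu(A)\,\mathrm d\eta(\nu)$. *)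

theory Defs
  imports "HOL-Probability.Probability"
begin

type_synonym 'n mat = "real ^ 'n ^ 'n"

text \<open>Positive semidefinite symmetric matrices (the cone S^D_+), D = CARD('n).
  The norm on real^'n^'n is the Frobenius norm.\<close>
definition psd :: "('n::finite) mat set" where
  "psd = {A. transpose A = A \<and> (\<forall>x. 0 \<le> x \<bullet> (A *v x))}"

definition loewner_le :: "('n::finite) mat \<Rightarrow> 'n mat \<Rightarrow> bool" where
  "loewner_le A B \<longleftrightarrow> B - A \<in> psd"

text \<open>P(K): Borel probability measures on the matrix space concentrated on K
  (identified with Borel probability measures on K).\<close>
definition Pm :: "('n::finite) mat set \<Rightarrow> ('n mat) measure set" where
  "Pm K = {M. sets M = sets borel \<and> prob_space M \<and> emeasure M K = 1}"

definition couplings :: "('n::finite) mat measure \<Rightarrow> 'n mat measure \<Rightarrow> ('n mat \<times> 'n mat) measure set" where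
  "couplings \<mu> \<nu> = {\<pi>. sets \<pi> = sets (borel \<Otimes>\<^sub>M borel) \<and> prob_space \<pi> \<and>
      (\<forall>A\<in>sets borel. emeasure \<pi> (A \<times> UNIV) = emeasure \<mu> A \<and>
                      emeasure \<pi> (UNIV \<times> A) = emeasure \<nu> A)}"

definition W1 :: "('n::finite) mat measure \<Rightarrow> 'n mat measure \<Rightarrow> real" where
  "W1 \<mu> \<nu> = enn2real (INF \<pi>\<in>couplings \<mu> \<nu>. \<integral>\<^sup>+ z. ennreal (dist (fst z) (snd z)) \<partial>\<pi>)"

text \<open>Monotone probability measures on S^D_+: laws of q(U), U uniform on [0,1),
  q : [0,1) \<rightarrow> S^D_+ Loewner-nondecreasing.\<close>
definition Pmono :: "('n::finite) mat measure set" where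
  "Pmono = {M. \<exists>q::real \<Rightarrow> 'n mat. q \<in> borel_measurable borel \<and>
       (\<forall>u\<in>{0..<1}. q u \<in> psd) \<and>
       (\<forall>u\<in>{0..<1}. \<forall>v\<in>{0..<1}. u \<le> v \<longrightarrow> loewner_le (q u) (q v)) \<and>
       M = distr (uniform_measure lborel {0..<1}) borel q}"

definition Pmono_on :: "('n::finite) mat set \<Rightarrow> 'n mat measure set" where
  "Pmono_on K = Pmono \<inter> Pm K"

definition mix :: "real \<Rightarrow> ('n::finite) mat measure \<Rightarrow> 'n mat measure \<Rightarrow> 'n mat measure" where
  "mix t \<mu> \<nu> = measure_of UNIV (sets borel)
      (\<lambda>A. ennreal t * emeasure \<mu> A + ennreal (1 - t) * emeasure \<nu> A)"

definition W1_closed :: "('n::finite) mat set \<Rightarrow> 'n mat measure set \<Rightarrow> bool" where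
  "W1_closed K C \<longleftrightarrow> C \<subseteq> Pm K \<and>
     (\<forall>f \<nu>. (\<forall>n. f n \<in> C) \<longrightarrow> \<nu> \<in> Pm K \<longrightarrow> (\<lambda>n. W1 (f n) \<nu>) \<longlonglongrightarrow> 0 \<longrightarrow> \<nu> \<in> C)"

definition mix_convex :: "('n::finite) mat measure set \<Rightarrow> bool" where
  "mix_convex C \<longleftrightarrow> (\<forall>\<mu>\<in>C. \<forall>\<nu>\<in>C. \<forall>t\<in>{0..1}. mix t \<mu> \<nu> \<in> C)"

definition closed_convex_hull_W1 :: "('n::finite) mat set \<Rightarrow> 'n mat measure set \<Rightarrow> 'n mat measure set" where
  "closed_convex_hull_W1 K S =
     \<Inter>{C. S \<subseteq> C \<and> W1_closed K C \<and> mix_convex C}"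

definition W1_open :: "('n::finite) mat set \<Rightarrow> 'n mat measure set \<Rightarrow> bool" where
  "W1_open K U \<longleftrightarrow> U \<subseteq> Pm K \<and>
     (\<forall>\<mu>\<in>U. \<exists>e>0. \<forall>\<nu>\<in>Pm K. W1 \<mu> \<nu> < e \<longrightarrow> \<nu> \<in> U)"

definition W1_borel_sets :: "('n::finite) mat set \<Rightarrow> 'n mat measure set set" where
  "W1_borel_sets K = sigma_sets (Pm K) {U. W1_open K U}"

end

theory Submission
  imports Defs
begin

(* Dirac masses at points of K are monotone, and push-forwards of a measure along a map onto a
   finite e-net of K are W1-close to it and finitely supported, hence finite mixtures of Dirac
   masses; so every closed mix-convex set containing the monotone measures is all of P(K).

   A monotone law q(U) lives on the closure F of the range of q, which is a chain for the Loewner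
   order because comparability is a closed relation. If Bar(eta) is that law, the integral of
   nu(-F) over eta vanishes, so eta-almost every nu lives on F; the map nu |-> nu(-F) is
   measurable because its superlevel sets are W1-open. On a compact Loewner chain the trace is
   injective and order preserving with continuous inverse, so a measure on the chain is the image
   of a real law under the inverse trace, and the quantile transform of that law exhibits the
   measure as monotone. *)

section \<open>Positive semidefinite matrices and Loewner chains\<close>

definition loewner_chain :: "('n::finite) mat set \<Rightarrow> bool" where
  "loewner_chain C \<longleftrightarrow> (\<forall>A\<in>C. \<forall>B\<in>C. loewner_le A B \<or> loewner_le B A)"

lemma psd_zero: "(0::('n::finite) mat) \<in> psd"
  by (simp add: psd_def transpose_def vec_eq_iff)

lemma loewner_le_refl: "loewner_le (A::('n::finite) mat) A"
  by (simp add: loewner_le_def psd_zero)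

lemma quadratic_form_axis: "axis i 1 \<bullet> ((P::('n::finite) mat) *v axis j 1) = P$i$j"
  by (simp add: matrix_vector_mult_basis inner_axis' column_def)

lemma closed_psd: "closed (psd :: ('n::finite) mat set)"
proof -
  have psd_eq: "psd = (\<Inter>i j. {A::'n mat. A$i$j = A$j$i}) \<inter> (\<Inter>x. {A. 0 \<le> x \<bullet> (A *v x)})"
    unfolding psd_def by (auto simp: vec_eq_iff transpose_def)
  have "closed {A::'n mat. 0 \<le> x \<bullet> (A *v x)}" for x :: "real^'n"
    unfolding matrix_vector_mult_def inner_vec_def
    by (intro closed_Collect_le continuous_intros)
  moreover have "closed {A::'n mat. A$i$j = A$j$i}" for i j
    by (intro closed_Collect_eq continuous_intros)
  ultimately show ?thesis
    unfolding psd_eq by (intro closed_Int closed_INT ballI)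
qed

lemma psd_diag_nonneg:
  assumes "P \<in> psd"
  shows "0 \<le> (P::('n::finite) mat)$i$i"
proof -
  have "0 \<le> axis i 1 \<bullet> (P *v axis i 1)"
    using assms by (simp add: psd_def)
  then show ?thesis
    by (simp add: quadratic_form_axis)
qed

lemma psd_entry_eq_0_if_diag_eq_0:
  assumes "P \<in> psd" and diag: "\<And>k. (P::('n::finite) mat)$k$k = 0"
  shows "P$i$j = 0"
proof -
  have "transpose P = P"
    using assms(1) by (simp add: psd_def)
  then have sym: "P$j$i = P$i$j"
    by (metis transpose_def vec_lambda_beta)
  have "(axis i 1 + c *\<^sub>R axis j 1) \<bullet> (P *v (axis i 1 + c *\<^sub>R axis j 1)) = 2 * c * P$i$j"
    for c
    using sym diag
    by (simp add: matrix_vector_right_distrib matrix_vector_mult_scaleR inner_add_left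
        inner_add_right quadratic_form_axis algebra_simps)
  moreover have "0 \<le> x \<bullet> (P *v x)" for x
    using assms(1) by (simp add: psd_def)
  ultimately have "0 \<le> 2 * c * P$i$j" for c
    by metis
  from this[of 1] this[of "-1"] show ?thesis
    by simp
qed

lemma psd_trace_eq_0_imp_zero:
  assumes "P \<in> psd" and "trace (P::('n::finite) mat) = 0"
  shows "P = 0"
proof -
  have "P$k$k = 0" for k
    using assms(2) sum_nonneg_eq_0_iff[of UNIV "\<lambda>k. P$k$k"] psd_diag_nonneg[OF assms(1)]
    by (simp add: trace_def)
  then show ?thesis
    using psd_entry_eq_0_if_diag_eq_0[OF assms(1)] by (simp add: vec_eq_iff)
qed

lemma loewner_le_imp_trace_le: "loewner_le A B \<Longrightarrow> trace (A::('n::finite) mat) \<le> trace B"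
  unfolding trace_def
  by (intro sum_mono) (use psd_diag_nonneg[of "B - A"] in \<open>auto simp: loewner_le_def\<close>)

lemma loewner_le_trace_eq_imp_eq:
  "loewner_le A B \<Longrightarrow> trace (A::('n::finite) mat) = trace B \<Longrightarrow> A = B"
  unfolding loewner_le_def using psd_trace_eq_0_imp_zero[of "B - A"] by (simp add: trace_sub)

lemma continuous_on_trace: "continuous_on S (trace :: ('n::finite) mat \<Rightarrow> real)"
  unfolding trace_def by (intro continuous_intros)

lemma borel_measurable_trace: "(trace :: ('n::finite) mat \<Rightarrow> real) \<in> borel_measurable borel"
  using continuous_on_trace by (rule borel_measurable_continuous_onI)

lemma loewner_chain_subset: "loewner_chain C \<Longrightarrow> D \<subseteq> C \<Longrightarrow> loewner_chain D"
  unfolding loewner_chain_def by blast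

lemma loewner_chain_closure:
  assumes "loewner_chain (C::('n::finite) mat set)"
  shows "loewner_chain (closure C)"
proof -
  define R where "R = (\<lambda>z::'n mat \<times> 'n mat. snd z - fst z) -` psd \<union> (\<lambda>z. fst z - snd z) -` psd"
  have "closed R"
    unfolding R_def by (intro closed_Un continuous_closed_vimage closed_psd continuous_intros)
  moreover have "C \<times> C \<subseteq> R"
  proof clarify
    fix A B assume "A \<in> C" "B \<in> C"
    then have "loewner_le A B \<or> loewner_le B A"
      using assms by (simp add: loewner_chain_def)
    then show "(A, B) \<in> R"
      by (auto simp: R_def loewner_le_def)
  qed
  ultimately have "closure (C \<times> C) \<subseteq> R"
    by (intro closure_minimal)
  then have "(A, B) \<in> R" if "A \<in> closure C" "B \<in> closure C" for A B
    using that by (auto simp: closure_Times)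
  then show ?thesis
    unfolding loewner_chain_def by (auto simp: R_def loewner_le_def)
qed

lemma inj_on_trace_loewner_chain: "loewner_chain C \<Longrightarrow> inj_on (trace :: ('n::finite) mat \<Rightarrow> real) C"
  unfolding loewner_chain_def inj_on_def using loewner_le_trace_eq_imp_eq by metis

lemma loewner_chain_trace_le_imp_loewner_le:
  assumes "loewner_chain C" and "A \<in> C" "B \<in> C" "trace A \<le> trace (B::('n::finite) mat)"
  shows "loewner_le A B"
proof -
  have "loewner_le A B \<or> loewner_le B A"
    using assms(1-3) unfolding loewner_chain_def by blast
  then show ?thesis
    using assms(4) loewner_le_imp_trace_le[of B A] loewner_le_trace_eq_imp_eq[of B A]
    by (auto simp: loewner_le_refl)
qed

section \<open>Mixtures of finitely many Dirac masses\<close>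

lemma sets_mix [simp]: "sets (mix t \<mu> \<nu>) = sets borel"
  using sets.sigma_sets_eq[of borel] by (simp add: mix_def)

lemma space_mix [simp]: "space (mix t \<mu> \<nu>) = UNIV"
  by (simp add: mix_def)

lemma emeasure_mix:
  fixes \<mu> \<nu> :: "('n::finite) mat measure"
  assumes "sets \<mu> = sets borel" "sets \<nu> = sets borel" "A \<in> sets borel"
  shows "emeasure (mix t \<mu> \<nu>) A = ennreal t * emeasure \<mu> A + ennreal (1 - t) * emeasure \<nu> A"
proof -
  let ?m = "\<lambda>A. ennreal t * emeasure \<mu> A + ennreal (1 - t) * emeasure \<nu> A"
  have "sigma_algebra UNIV (sets borel)"
    using sets.sigma_algebra_axioms[of borel] by simp
  moreover have "positive (sets borel) ?m"
    by (simp add: positive_def)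
  moreover have "countably_additive (sets borel) ?m"
  proof (rule countably_additiveI)
    fix F :: "nat \<Rightarrow> 'n mat set"
    assume F: "range F \<subseteq> sets borel" "disjoint_family F"
    then have "(\<Sum>i. ?m (F i)) = ennreal t * (\<Sum>i. emeasure \<mu> (F i)) + ennreal (1 - t) * (\<Sum>i. emeasure \<nu> (F i))"
      by (simp add: suminf_add[symmetric] ennreal_suminf_cmult)
    also have "\<dots> = ?m (\<Union>i. F i)"
      using F assms(1,2) by (simp add: suminf_emeasure)
    finally show "(\<Sum>i. ?m (F i)) = ?m (\<Union>i. F i)" .
  qed
  ultimately show ?thesis
    unfolding mix_def using emeasure_measure_of_sigma assms(3) by blast
qed

lemma prob_space_mix:
  assumes "prob_space \<mu>" "prob_space \<nu>" "sets \<mu> = sets borel" "sets \<nu> = sets borel"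
    and "t \<in> {0..1}"
  shows "prob_space (mix t \<mu> \<nu>)"
proof (rule prob_spaceI)
  have "emeasure \<mu> UNIV = 1" "emeasure \<nu> UNIV = 1"
    using assms(1-4) by (metis prob_space.emeasure_space_1 sets_eq_imp_space_eq space_borel)+
  then have "emeasure (mix t \<mu> \<nu>) UNIV = ennreal t + ennreal (1 - t)"
    using assms(3,4) by (simp add: emeasure_mix)
  also have "\<dots> = 1"
    using assms(5) by (simp flip: ennreal_plus)
  finally show "emeasure (mix t \<mu> \<nu>) (space (mix t \<mu> \<nu>)) = 1"
    by simp
qed

lemma mix_convex_Pm: "mix_convex (Pm K)"
  unfolding mix_convex_def
proof (intro ballI)
  fix \<mu> \<nu> t assume \<mu>: "\<mu> \<in> Pm K" and \<nu>: "\<nu> \<in> Pm K" and t: "t \<in> {0..(1::real)}"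
  have "K \<in> sets borel"
    using \<mu> emeasure_notin_sets by (fastforce simp: Pm_def)
  then have "emeasure (mix t \<mu> \<nu>) K = ennreal t + ennreal (1 - t)"
    using \<mu> \<nu> by (simp add: emeasure_mix Pm_def)
  also have "\<dots> = 1"
    using t by (simp flip: ennreal_plus)
  finally show "mix t \<mu> \<nu> \<in> Pm K"
    using \<mu> \<nu> t prob_space_mix[of \<mu> \<nu> t] by (simp add: Pm_def)
qed

lemma return_in_Pmono_on:
  assumes "s \<in> K" "K \<subseteq> psd" "K \<in> sets borel"
  shows "return borel (s::('n::finite) mat) \<in> Pmono_on K"
proof -
  have "prob_space (uniform_measure lborel {0..<1::real})"
    by (intro prob_space_uniform_measure) auto
  then have "return borel s = distr (uniform_measure lborel {0..<1::real}) borel (\<lambda>_. s)"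
    by (simp add: prob_space.distr_const)
  then have "return borel s \<in> Pmono"
    unfolding Pmono_def using assms by (intro CollectI exI[of _ "\<lambda>_. s"]) (auto simp: loewner_le_refl)
  moreover have "return borel s \<in> Pm K"
    using assms by (simp add: Pm_def prob_space_return)
  ultimately show ?thesis
    by (simp add: Pmono_on_def)
qed

lemma emeasure_split_atom:
  assumes "sets \<nu> = sets (borel :: 'a::t1_space measure)" "A \<in> sets borel"
  shows "emeasure \<nu> A = emeasure \<nu> {s} * indicator A s + emeasure \<nu> (A - {s})"
proof (cases "s \<in> A")
  case True
  then have "A = {s} \<union> (A - {s})"
    by blast
  then have "emeasure \<nu> A = emeasure \<nu> {s} + emeasure \<nu> (A - {s})"
    using assms by (metis Diff_disjoint plus_emeasure sets.Diff borel_singleton sets.empty_sets)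
  then show ?thesis
    using True by simp
qed simp

lemma measure_singleton_eq_1_imp_return:
  fixes \<nu> :: "'a::t1_space measure"
  assumes "prob_space \<nu>" "sets \<nu> = sets borel" "measure \<nu> {s} = 1"
  shows "\<nu> = return borel s"
proof (rule measure_eqI)
  interpret prob_space \<nu> by fact
  fix A assume "A \<in> sets \<nu>"
  then have A: "A \<in> sets borel"
    using assms(2) by simp
  have "emeasure \<nu> (A - {s}) \<le> emeasure \<nu> (space \<nu> - {s})"
    using A assms(2) by (intro emeasure_mono) (auto simp: sets_eq_imp_space_eq)
  also have "\<dots> = 0"
    using assms prob_compl[of "{s}"] by (simp add: emeasure_eq_measure)
  finally show "emeasure \<nu> A = emeasure (return borel s) A"
    using A assms emeasure_split_atom[of \<nu> A s] by (simp add: emeasure_eq_measure)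
qed (use assms in simp)

lemma mix_return_uniform_measure:
  fixes \<nu> :: "('n::finite) mat measure"
  assumes "prob_space \<nu>" "sets \<nu> = sets borel" and p: "measure \<nu> {s} < 1"
  shows "\<nu> = mix (measure \<nu> {s}) (return borel s) (uniform_measure \<nu> (- {s}))"
proof (rule measure_eqI)
  interpret prob_space \<nu> by fact
  define p where "p = measure \<nu> {s}"
  fix A assume "A \<in> sets \<nu>"
  then have A: "A \<in> sets borel"
    using assms(2) by simp
  have "emeasure \<nu> (- {s}) = ennreal (1 - p)"
    using assms(2) prob_compl[of "{s}"] unfolding p_def
    by (simp add: emeasure_eq_measure Compl_eq_Diff_UNIV sets_eq_imp_space_eq)
  moreover have "ennreal (1 - p) \<noteq> 0"
    using p by (simp add: p_def)
  ultimately have "ennreal (1 - p) * emeasure (uniform_measure \<nu> (- {s})) A = emeasure \<nu> (A - {s})"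
    using A assms(2)
    by (simp add: ennreal_times_divide mult.commute[of "ennreal (1 - p)"] mult_divide_eq_ennreal
        Diff_eq Int_commute)
  then show "emeasure \<nu> A = emeasure (mix (measure \<nu> {s}) (return borel s) (uniform_measure \<nu> (- {s}))) A"
    using A assms(2) emeasure_split_atom[of \<nu> A s]
    by (simp add: emeasure_mix p_def emeasure_eq_measure mult.commute)
qed (use assms in simp)

lemma finitely_supported_in_mix_convex:
  fixes S :: "('n::finite) mat set"
  assumes C: "mix_convex C" "\<And>s. s \<in> S \<Longrightarrow> return borel s \<in> C" and "finite S"
    and \<nu>: "prob_space \<nu>" "sets \<nu> = sets borel" "emeasure \<nu> S = 1"
  shows "\<nu> \<in> C"
  using \<open>finite S\<close> C(2) \<nu>
proof (induction S arbitrary: \<nu> rule: finite_induct)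
  case (insert s S)
  interpret prob_space \<nu> by fact
  show ?case
  proof (cases "measure \<nu> {s} = 1")
    case True
    then show ?thesis
      using insert.prems measure_singleton_eq_1_imp_return by fastforce
  next
    case False
    define p where "p = measure \<nu> {s}"
    define \<nu>' where "\<nu>' = uniform_measure \<nu> (- {s})"
    have p: "0 \<le> p" "p < 1"
      using False unfolding p_def by (auto simp: less_le)
    have "emeasure \<nu> {s} + emeasure \<nu> S = emeasure \<nu> (insert s S)"
      using insert.hyps insert.prems(3)
      by (simp add: plus_emeasure borel_closed finite_imp_closed)
    then have S: "emeasure \<nu> S = ennreal (1 - p)"
      using insert.prems(4) by (simp add: emeasure_eq_measure p_def flip: ennreal_plus)
    have "emeasure \<nu> (- {s}) = ennreal (1 - p)"
      using insert.prems(3) prob_compl[of "{s}"] unfolding p_def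
      by (simp add: emeasure_eq_measure Compl_eq_Diff_UNIV sets_eq_imp_space_eq)
    moreover have "S \<in> sets \<nu>" "- {s} \<in> sets \<nu>"
      using insert.hyps(1) insert.prems(3) by (simp_all add: borel_closed borel_open finite_imp_closed)
    ultimately have "prob_space \<nu>'" "emeasure \<nu>' S = 1"
      using p S insert.hyps(2) unfolding \<nu>'_def
      by (auto intro!: prob_space_uniform_measure simp: Int_absorb1 subset_Compl_singleton divide_ennreal)
    then have "\<nu>' \<in> C"
      using insert.IH insert.prems(1,3) by (simp add: \<nu>'_def)
    then have "mix p (return borel s) \<nu>' \<in> C"
      using C(1) insert.prems(1) p unfolding mix_convex_def by auto
    then show ?thesis
      using mix_return_uniform_measure[of \<nu> s] insert.prems(2,3) p
      by (simp add: p_def \<nu>'_def)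
  qed
qed simp

section \<open>Approximation in the Wasserstein distance\<close>

lemma W1_nonneg: "0 \<le> W1 \<mu> \<nu>"
  by (simp add: W1_def)

lemma W1_le_coupling_cost:
  assumes "\<pi> \<in> couplings \<mu> \<nu>" "(\<integral>\<^sup>+ z. ennreal (dist (fst z) (snd z)) \<partial>\<pi>) \<le> ennreal e" "0 \<le> e"
  shows "W1 \<mu> \<nu> \<le> e"
proof -
  have "(INF \<pi>\<in>couplings \<mu> \<nu>. \<integral>\<^sup>+ z. ennreal (dist (fst z) (snd z)) \<partial>\<pi>) \<le> ennreal e"
    using assms(1,2) by (meson INF_lower order_trans)
  then have "W1 \<mu> \<nu> \<le> enn2real (ennreal e)"
    unfolding W1_def by (intro enn2real_mono) auto
  then show ?thesis
    using assms(3) by simp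
qed

lemma measurable_graph:
  assumes "sets \<mu> = sets borel" "g \<in> borel_measurable borel"
  shows "(\<lambda>x. (g x, x)) \<in> \<mu> \<rightarrow>\<^sub>M borel \<Otimes>\<^sub>M borel"
proof -
  have "g \<in> borel_measurable \<mu>"
    using assms measurable_cong_sets[of \<mu> borel borel borel] by simp
  then show ?thesis
    using measurable_ident_sets[OF assms(1)] by (intro measurable_Pair) simp_all
qed

lemma graph_coupling:
  fixes \<mu> :: "('n::finite) mat measure"
  assumes \<mu>: "prob_space \<mu>" "sets \<mu> = sets borel" and g: "g \<in> borel_measurable borel"
  shows "distr \<mu> (borel \<Otimes>\<^sub>M borel) (\<lambda>x. (g x, x)) \<in> couplings (distr \<mu> borel g) \<mu>"
proof -
  have sp: "space \<mu> = UNIV"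
    using \<mu>(2) sets_eq_imp_space_eq by fastforce
  have g': "g \<in> borel_measurable \<mu>"
    using g \<mu>(2) measurable_cong_sets[of \<mu> borel borel borel] by simp
  have graph: "(\<lambda>x. (g x, x)) \<in> \<mu> \<rightarrow>\<^sub>M borel \<Otimes>\<^sub>M borel"
    using \<mu>(2) g by (rule measurable_graph)
  have "emeasure (distr \<mu> (borel \<Otimes>\<^sub>M borel) (\<lambda>x. (g x, x))) (A \<times> UNIV) = emeasure (distr \<mu> borel g) A"
    "emeasure (distr \<mu> (borel \<Otimes>\<^sub>M borel) (\<lambda>x. (g x, x))) (UNIV \<times> A) = emeasure \<mu> A"
    if A: "A \<in> sets borel" for A :: "'n mat set"
  proof -
    have AU: "A \<times> UNIV \<in> sets (borel \<Otimes>\<^sub>M (borel :: 'n mat measure))"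
      and UA: "UNIV \<times> A \<in> sets (borel \<Otimes>\<^sub>M (borel :: 'n mat measure))"
      using A by (auto intro!: pair_measureI)
    have "(\<lambda>x. (g x, x)) -` (A \<times> UNIV) \<inter> space \<mu> = g -` A \<inter> space \<mu>"
      "(\<lambda>x. (g x, x)) -` (UNIV \<times> A) \<inter> space \<mu> = A"
      using sp by auto
    then show "emeasure (distr \<mu> (borel \<Otimes>\<^sub>M borel) (\<lambda>x. (g x, x))) (A \<times> UNIV) = emeasure (distr \<mu> borel g) A"
      "emeasure (distr \<mu> (borel \<Otimes>\<^sub>M borel) (\<lambda>x. (g x, x))) (UNIV \<times> A) = emeasure \<mu> A"
      unfolding emeasure_distr[OF graph AU] emeasure_distr[OF graph UA] emeasure_distr[OF g' A]
      by simp_all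
  qed
  then show ?thesis
    using prob_space.prob_space_distr[OF \<mu>(1) graph] by (simp add: couplings_def)
qed

lemma borel_measurable_coupling_cost:
  "(\<lambda>z. ennreal (dist (fst z) (snd z)))
     \<in> borel_measurable (borel \<Otimes>\<^sub>M (borel :: 'a::{second_countable_topology, metric_space} measure))"
  by (intro measurable_compose[OF _ measurable_ennreal] borel_measurable_dist measurable_fst''
      measurable_snd'' measurable_ident_sets refl)

lemma W1_distr_le:
  fixes \<mu> :: "('n::finite) mat measure"
  assumes \<mu>: "prob_space \<mu>" "sets \<mu> = sets borel" and g: "g \<in> borel_measurable borel"
    and close: "AE x in \<mu>. dist (g x) x \<le> e" and "0 \<le> e"
  shows "W1 (distr \<mu> borel g) \<mu> \<le> e"
proof (rule W1_le_coupling_cost[OF graph_coupling[OF \<mu> g] _ \<open>0 \<le> e\<close>])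
  interpret prob_space \<mu> by fact
  have graph: "(\<lambda>x. (g x, x)) \<in> \<mu> \<rightarrow>\<^sub>M borel \<Otimes>\<^sub>M borel"
    using \<mu>(2) g by (rule measurable_graph)
  have "(\<integral>\<^sup>+ z. ennreal (dist (fst z) (snd z)) \<partial>distr \<mu> (borel \<Otimes>\<^sub>M borel) (\<lambda>x. (g x, x)))
      = (\<integral>\<^sup>+ x. ennreal (dist (g x) x) \<partial>\<mu>)"
    using nn_integral_distr[OF graph] borel_measurable_coupling_cost by simp
  also have "\<dots> \<le> (\<integral>\<^sup>+ x. ennreal e \<partial>\<mu>)"
    using close by (intro nn_integral_mono_AE) (auto elim!: eventually_mono intro!: ennreal_leI)
  also have "\<dots> = ennreal e"
    by (simp add: emeasure_space_1)
  finally show "(\<integral>\<^sup>+ z. ennreal (dist (fst z) (snd z)) \<partial>distr \<mu> (borel \<Otimes>\<^sub>M borel) (\<lambda>x. (g x, x)))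
      \<le> ennreal e" .
qed

fun snap_to_net :: "real \<Rightarrow> 'a::metric_space \<Rightarrow> 'a list \<Rightarrow> 'a \<Rightarrow> 'a" where
  "snap_to_net e d [] x = d"
| "snap_to_net e d (s # ss) x = (if dist x s < e then s else snap_to_net e d ss x)"

lemma snap_to_net_measurable: "snap_to_net e d ss \<in> borel_measurable borel"
proof (induction ss)
  case (Cons s ss)
  have "{x \<in> space borel. dist x s < e} = ball s e"
    by (auto simp: ball_def dist_commute)
  then show ?case
    using Cons by (simp add: measurable_If)
qed simp

lemma snap_to_net_in: "snap_to_net e d ss x \<in> insert d (set ss)"
  by (induction ss) auto

lemma dist_snap_to_net_less: "\<exists>s\<in>set ss. dist x s < e \<Longrightarrow> dist x (snap_to_net e d ss x) < e"
  by (induction ss) auto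

lemma exists_finite_net_retraction:
  fixes K :: "'a::metric_space set"
  assumes "compact K" "K \<noteq> {}" "0 < e"
  obtains S g where "finite S" "S \<subseteq> K" "g \<in> borel_measurable borel" "\<And>x. g x \<in> S"
    "\<And>x. x \<in> K \<Longrightarrow> dist (g x) x \<le> e"
proof -
  obtain d where d: "d \<in> K"
    using assms(2) by blast
  obtain S where S: "S \<subseteq> K" "finite S" "K \<subseteq> (\<Union>x\<in>S. ball x e)"
  proof (rule compactE_image[OF \<open>compact K\<close>, of K "\<lambda>x. ball x e"])
    show "K \<subseteq> (\<Union>x\<in>K. ball x e)"
      using \<open>0 < e\<close> by force
  qed auto
  obtain ss where ss: "set ss = S"
    using finite_list[OF S(2)] by blast
  define g where "g = snap_to_net e d ss"
  have "dist (g x) x \<le> e" if x: "x \<in> K" for x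
  proof -
    obtain s where "s \<in> set ss" "dist x s < e"
      using S(3) x ss by (force simp: dist_commute)
    then have "dist x (g x) < e"
      unfolding g_def by (intro dist_snap_to_net_less) blast
    then show ?thesis
      by (simp add: dist_commute)
  qed
  moreover have "g x \<in> insert d S" for x
    using snap_to_net_in[of e d ss x] ss by (simp add: g_def)
  moreover have "g \<in> borel_measurable borel"
    unfolding g_def by (rule snap_to_net_measurable)
  ultimately show ?thesis
    using S d by (intro that[of "insert d S" g]) auto
qed

lemma exists_finitely_supported_W1_le:
  fixes K :: "('n::finite) mat set"
  assumes "compact K" and \<mu>: "\<mu> \<in> Pm K" and "0 < e"
  obtains S \<nu> where "finite S" "S \<subseteq> K" "prob_space \<nu>" "sets \<nu> = sets borel"
    "emeasure \<nu> S = 1" "W1 \<nu> \<mu> \<le> e"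
proof -
  have \<mu>1: "prob_space \<mu>" "sets \<mu> = sets borel" "emeasure \<mu> K = 1"
    using \<mu> by (auto simp: Pm_def)
  interpret prob_space \<mu> by fact
  have "K \<noteq> {}"
    using \<mu>1(3) by auto
  then obtain S g where S: "finite S" "S \<subseteq> K" and g: "g \<in> borel_measurable borel" "\<And>x. g x \<in> S"
    "\<And>x. x \<in> K \<Longrightarrow> dist (g x) x \<le> e"
    by (rule exists_finite_net_retraction[OF \<open>compact K\<close> _ \<open>0 < e\<close>]) blast
  have g': "g \<in> borel_measurable \<mu>"
    using g(1) \<mu>1(2) measurable_cong_sets[of \<mu> borel borel borel] by simp
  have "AE x in \<mu>. x \<in> K"
    using \<mu>1 \<open>compact K\<close> by (simp add: AE_in_set_eq_1 borel_compact emeasure_eq_measure)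
  then have "W1 (distr \<mu> borel g) \<mu> \<le> e"
    using g(3) \<open>0 < e\<close> by (intro W1_distr_le[OF \<mu>1(1,2) g(1)]) (auto elim!: eventually_mono)
  moreover have "g -` S \<inter> space \<mu> = space \<mu>"
    using g(2) by auto
  then have "emeasure (distr \<mu> borel g) S = 1"
    using S(1) g' by (simp add: emeasure_distr borel_closed finite_imp_closed emeasure_space_1)
  moreover have "prob_space (distr \<mu> borel g)"
    using g' by (rule prob_space_distr)
  ultimately show ?thesis
    using S by (intro that[of S "distr \<mu> borel g"]) auto
qed

lemma exists_mix_convex_W1_le:
  fixes K :: "('n::finite) mat set"
  assumes "compact K" "K \<subseteq> psd" and C: "Pmono_on K \<subseteq> C" "mix_convex C"
    and "\<mu> \<in> Pm K" "0 < e"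
  shows "\<exists>\<nu>\<in>C. W1 \<nu> \<mu> \<le> e"
proof -
  obtain S \<nu> where \<nu>: "finite S" "S \<subseteq> K" "prob_space \<nu>" "sets \<nu> = sets borel"
    "emeasure \<nu> S = 1" "W1 \<nu> \<mu> \<le> e"
    by (rule exists_finitely_supported_W1_le[OF assms(1,5,6)])
  have "return borel s \<in> C" if "s \<in> S" for s
    using C(1) return_in_Pmono_on[of s K] that \<nu>(2) assms(1,2) by (auto simp: borel_compact)
  then have "\<nu> \<in> C"
    by (rule finitely_supported_in_mix_convex[OF C(2)]) (use \<nu> in auto)
  then show ?thesis
    using \<nu>(6) by blast
qed

lemma closed_convex_hull_Pmono_on_eq_Pm:
  fixes K :: "('n::finite) mat set"
  assumes "compact K" and "K \<subseteq> psd"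
  shows "closed_convex_hull_W1 K (Pmono_on K) = Pm K"
proof
  show "closed_convex_hull_W1 K (Pmono_on K) \<subseteq> Pm K"
    unfolding closed_convex_hull_W1_def
    by (rule Inter_lower) (auto simp: W1_closed_def mix_convex_Pm Pmono_on_def)
  show "Pm K \<subseteq> closed_convex_hull_W1 K (Pmono_on K)"
    unfolding closed_convex_hull_W1_def
  proof (intro Inter_greatest subsetI)
    fix C \<mu> assume C: "C \<in> {C. Pmono_on K \<subseteq> C \<and> W1_closed K C \<and> mix_convex C}"
      and \<mu>: "\<mu> \<in> Pm K"
    have "\<exists>\<nu>\<in>C. W1 \<nu> \<mu> \<le> 1 / real (Suc n)" for n
      using C \<mu> by (intro exists_mix_convex_W1_le[OF assms]) auto
    then have "\<exists>f. \<forall>n. f n \<in> C \<and> W1 (f n) \<mu> \<le> 1 / real (Suc n)"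
      by (intro choice) (simp add: Bex_def)
    then obtain f where f: "\<And>n. f n \<in> C" "\<And>n. W1 (f n) \<mu> \<le> 1 / real (Suc n)"
      by blast
    have "(\<lambda>n. W1 (f n) \<mu>) \<longlonglongrightarrow> 0"
    proof (rule tendsto_sandwich[of "\<lambda>_. 0" _ _ "\<lambda>n. 1 / real (Suc n)"])
      show "\<forall>\<^sub>F n in sequentially. 0 \<le> W1 (f n) \<mu>"
        by (simp add: W1_nonneg)
      show "\<forall>\<^sub>F n in sequentially. W1 (f n) \<mu> \<le> 1 / real (Suc n)"
        using f(2) by simp
      show "(\<lambda>n. 1 / real (Suc n)) \<longlonglongrightarrow> 0"
        using LIMSEQ_inverse_real_of_nat by (simp add: inverse_eq_divide)
    qed simp
    then show "\<mu> \<in> C"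
      using C f(1) \<mu> unfolding W1_closed_def by blast
  qed
qed

section \<open>Superlevel sets of the mass outside a closed set\<close>

lemma product_coupling:
  fixes \<mu> \<nu> :: "('n::finite) mat measure"
  assumes "prob_space \<mu>" "prob_space \<nu>" "sets \<mu> = sets borel" "sets \<nu> = sets borel"
  shows "\<mu> \<Otimes>\<^sub>M \<nu> \<in> couplings \<mu> \<nu>"
proof -
  interpret pair_prob_space \<mu> \<nu>
    using assms(1,2) by (simp add: pair_prob_space_def pair_sigma_finite_def prob_space_imp_sigma_finite)
  have "emeasure \<mu> UNIV = 1" "emeasure \<nu> UNIV = 1"
    using M1.emeasure_space_1 M2.emeasure_space_1 assms(3,4)
    by (simp_all add: sets_eq_imp_space_eq[of _ borel])
  moreover have "emeasure (\<mu> \<Otimes>\<^sub>M \<nu>) (A \<times> B) = emeasure \<mu> A * emeasure \<nu> B"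
    if "A \<in> sets borel" "B \<in> sets borel" for A B
    using that assms(3,4) by (intro M2.emeasure_pair_measure_Times) auto
  ultimately show ?thesis
    unfolding couplings_def
    using sets_pair_measure_cong[OF assms(3,4)] prob_space_axioms by simp
qed

lemma ennreal_W1_eq_INF:
  fixes K :: "('n::finite) mat set"
  assumes "compact K" and \<mu>: "\<mu> \<in> Pm K" and \<nu>: "\<nu> \<in> Pm K"
  shows "ennreal (W1 \<mu> \<nu>) = (INF \<pi>\<in>couplings \<mu> \<nu>. \<integral>\<^sup>+ z. ennreal (dist (fst z) (snd z)) \<partial>\<pi>)"
proof -
  let ?cost = "\<lambda>\<pi>. \<integral>\<^sup>+ z. ennreal (dist (fst z) (snd z)) \<partial>\<pi>"
  have \<mu>1: "prob_space \<mu>" "sets \<mu> = sets borel" "emeasure \<mu> K = 1"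
    and \<nu>1: "prob_space \<nu>" "sets \<nu> = sets borel" "emeasure \<nu> K = 1"
    using \<mu> \<nu> by (auto simp: Pm_def)
  interpret pair_prob_space \<mu> \<nu>
    using \<mu>1(1) \<nu>1(1) by (simp add: pair_prob_space_def pair_sigma_finite_def prob_space_imp_sigma_finite)
  have K: "K \<in> sets borel"
    using \<open>compact K\<close> by (simp add: borel_compact)
  have "K \<times> K \<in> sets (\<mu> \<Otimes>\<^sub>M \<nu>)"
    using K sets_pair_measure_cong[OF \<mu>1(2) \<nu>1(2)] by (simp add: pair_measureI)
  moreover have "emeasure (\<mu> \<Otimes>\<^sub>M \<nu>) (K \<times> K) = 1"
    using K \<mu>1 \<nu>1 by (simp add: M2.emeasure_pair_measure_Times)
  ultimately have "AE z in \<mu> \<Otimes>\<^sub>M \<nu>. z \<in> K \<times> K"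
    by (simp add: P.AE_in_set_eq_1 P.emeasure_eq_measure)
  then have "AE z in \<mu> \<Otimes>\<^sub>M \<nu>. ennreal (dist (fst z) (snd z)) \<le> ennreal (diameter K)"
  proof (rule eventually_mono)
    fix z :: "'n mat \<times> 'n mat" assume "z \<in> K \<times> K"
    then show "ennreal (dist (fst z) (snd z)) \<le> ennreal (diameter K)"
      using diameter_bounded_bound[OF compact_imp_bounded[OF \<open>compact K\<close>]] by (auto intro!: ennreal_leI)
  qed
  then have "?cost (\<mu> \<Otimes>\<^sub>M \<nu>) \<le> (\<integral>\<^sup>+ z. ennreal (diameter K) \<partial>(\<mu> \<Otimes>\<^sub>M \<nu>))"
    by (rule nn_integral_mono_AE)
  also have "\<dots> < top"
    by (simp add: P.emeasure_space_1)
  finally have "(INF \<pi>\<in>couplings \<mu> \<nu>. ?cost \<pi>) < top"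
    using INF_lower[OF product_coupling[OF \<mu>1(1) \<nu>1(1) \<mu>1(2) \<nu>1(2)], of ?cost]
    by (rule order.strict_trans1[rotated])
  then show ?thesis
    by (simp add: W1_def)
qed

lemma exists_coupling_cost_less:
  fixes K :: "('n::finite) mat set"
  assumes "compact K" "\<mu> \<in> Pm K" "\<nu> \<in> Pm K" "W1 \<mu> \<nu> < e"
  obtains \<pi> where "\<pi> \<in> couplings \<mu> \<nu>" "(\<integral>\<^sup>+ z. ennreal (dist (fst z) (snd z)) \<partial>\<pi>) < ennreal e"
proof -
  have "(INF \<pi>\<in>couplings \<mu> \<nu>. \<integral>\<^sup>+ z. ennreal (dist (fst z) (snd z)) \<partial>\<pi>) < ennreal e"
    using assms(4) W1_nonneg[of \<mu> \<nu>] ennreal_W1_eq_INF[OF assms(1-3)]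
    by (simp flip: ennreal_less_iff)
  then show ?thesis
    using that unfolding INF_less_iff by blast
qed

lemma exists_infdist_gt_measure_gt:
  fixes F :: "'a::{second_countable_topology, metric_space} set"
  assumes "prob_space \<mu>" "sets \<mu> = sets borel" "closed F" "F \<noteq> {}" "a < measure \<mu> (- F)"
  obtains \<delta> where "0 < \<delta>" "a < measure \<mu> {x. \<delta> < infdist x F}"
proof -
  interpret prob_space \<mu> by fact
  define U where "U n = {x. 1 / real (Suc n) < infdist x F}" for n
  have U_sets: "U n \<in> sets \<mu>" for n
    unfolding U_def using assms(2) by (simp add: borel_open open_Collect_less continuous_intros)
  have "incseq U"
    by (rule incseq_SucI) (auto simp: U_def frac_le elim!: le_less_trans[rotated])
  moreover have "(\<Union>n. U n) = - F"
  proof (intro set_eqI iffI)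
    fix x assume "x \<in> (\<Union>n. U n)"
    then have "infdist x F \<noteq> 0"
      unfolding U_def by (auto dest: order.strict_trans[rotated, of 0])
    then show "x \<in> - F"
      using in_closed_iff_infdist_zero[OF assms(3,4)] by auto
  next
    fix x assume "x \<in> - F"
    then have "0 < infdist x F"
      using in_closed_iff_infdist_zero[OF assms(3,4)] infdist_nonneg[of x F] by auto
    then obtain n where "inverse (real (Suc n)) < infdist x F"
      using reals_Archimedean by blast
    then show "x \<in> (\<Union>n. U n)"
      unfolding U_def by (auto simp: inverse_eq_divide)
  qed
  ultimately have "(\<lambda>n. measure \<mu> (U n)) \<longlonglongrightarrow> measure \<mu> (- F)"
    using U_sets finite_Lim_measure_incseq[of U] by auto
  then obtain n where "a < measure \<mu> (U n)"
    using order_tendstoD(1)[OF _ assms(5)] by (metis eventually_sequentially order_refl)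
  then show ?thesis
    using that[of "1 / real (Suc n)"] by (simp add: U_def)
qed

lemma sets_dist_ge:
  "{z. \<delta> \<le> dist (fst z) (snd z)} \<in> sets (borel \<Otimes>\<^sub>M (borel :: 'a::{second_countable_topology, metric_space} measure))"
proof -
  have "(\<lambda>z. dist (fst z) (snd z)) \<in> borel_measurable (borel \<Otimes>\<^sub>M (borel :: 'a measure))"
    by (intro borel_measurable_dist measurable_fst'' measurable_snd'' measurable_ident_sets refl)
  then show ?thesis
    unfolding borel_measurable_iff_ge by (simp add: space_pair_measure)
qed

lemma emeasure_dist_ge_le_coupling_cost:
  assumes "sets \<pi> = sets (borel \<Otimes>\<^sub>M (borel :: 'a::{second_countable_topology, metric_space} measure))"
  shows "ennreal \<delta> * emeasure \<pi> {z. \<delta> \<le> dist (fst z) (snd z)}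
           \<le> (\<integral>\<^sup>+ z. ennreal (dist (fst z) (snd z)) \<partial>\<pi>)"
proof -
  have "{z. \<delta> \<le> dist (fst z) (snd z)} \<in> sets \<pi>"
    using sets_dist_ge[of \<delta>] assms by simp
  then have "ennreal \<delta> * emeasure \<pi> {z. \<delta> \<le> dist (fst z) (snd z)}
      = (\<integral>\<^sup>+ z. ennreal \<delta> * indicator {z. \<delta> \<le> dist (fst z) (snd z)} z \<partial>\<pi>)"
    by (rule nn_integral_cmult_indicator[symmetric])
  also have "\<dots> \<le> (\<integral>\<^sup>+ z. ennreal (dist (fst z) (snd z)) \<partial>\<pi>)"
    by (intro nn_integral_mono) (auto simp: indicator_def intro!: ennreal_leI)
  finally show ?thesis .
qed

(* Mass of mu farther than delta from F is either moved off F or moved by at least delta. *)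
lemma measure_infdist_gt_le_coupling_cost:
  fixes F :: "('n::finite) mat set"
  assumes \<pi>: "\<pi> \<in> couplings \<mu> \<nu>" and "closed F" "0 < \<delta>"
  shows "ennreal (\<delta> * (measure \<mu> {x. \<delta> < infdist x F} - measure \<nu> (- F)))
           \<le> (\<integral>\<^sup>+ z. ennreal (dist (fst z) (snd z)) \<partial>\<pi>)"
proof -
  define U where "U = {x. \<delta> < infdist x F}"
  define D where "D = {z :: 'n mat \<times> 'n mat. \<delta> \<le> dist (fst z) (snd z)}"
  have \<pi>1: "sets \<pi> = sets (borel \<Otimes>\<^sub>M borel)" "prob_space \<pi>"
    and marg: "\<And>A. A \<in> sets borel \<Longrightarrow> emeasure \<pi> (A \<times> UNIV) = emeasure \<mu> A \<and> emeasure \<pi> (UNIV \<times> A) = emeasure \<nu> A"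
    using \<pi> unfolding couplings_def by auto
  interpret \<pi>: prob_space \<pi> by fact
  have U: "U \<in> sets borel" and F: "- F \<in> sets borel"
    using \<open>closed F\<close> by (auto simp: U_def borel_open open_Collect_less continuous_intros)
  have UF: "U \<times> UNIV \<in> sets \<pi>" "UNIV \<times> - F \<in> sets \<pi>"
    using U F \<pi>1(1) by (auto intro!: pair_measureI)
  have D: "D \<in> sets \<pi>"
    unfolding \<pi>1(1) D_def by (rule sets_dist_ge)
  have cover: "U \<times> UNIV \<subseteq> (UNIV \<times> - F) \<union> D"
  proof
    fix z assume z: "z \<in> U \<times> (UNIV :: 'n mat set)"
    show "z \<in> (UNIV \<times> - F) \<union> D"
    proof (cases "snd z \<in> F")
      case True
      then have "infdist (fst z) F \<le> dist (fst z) (snd z)"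
        by (rule infdist_le)
      then show ?thesis
        using z by (auto simp: U_def D_def)
    qed (auto simp: mem_Times_iff)
  qed
  have "measure \<mu> U = measure \<pi> (U \<times> UNIV)"
    using marg[OF U] by (simp add: measure_def)
  also have "\<dots> \<le> measure \<pi> ((UNIV \<times> - F) \<union> D)"
    using cover UF D by (intro \<pi>.finite_measure_mono) auto
  also have "\<dots> \<le> measure \<pi> (UNIV \<times> - F) + measure \<pi> D"
    using UF D by (intro measure_subadditive) (auto simp: \<pi>.emeasure_eq_measure)
  also have "measure \<pi> (UNIV \<times> - F) = measure \<nu> (- F)"
    using marg[OF F] by (simp add: measure_def)
  finally have "measure \<mu> U \<le> measure \<nu> (- F) + measure \<pi> D" .
  then have "\<delta> * (measure \<mu> U - measure \<nu> (- F)) \<le> \<delta> * measure \<pi> D"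
    using \<open>0 < \<delta>\<close> by (intro mult_left_mono) auto
  then have "ennreal (\<delta> * (measure \<mu> U - measure \<nu> (- F))) \<le> ennreal (\<delta> * measure \<pi> D)"
    by (rule ennreal_leI)
  also have "\<dots> = ennreal \<delta> * emeasure \<pi> D"
    using \<open>0 < \<delta>\<close> by (simp add: \<pi>.emeasure_eq_measure ennreal_mult)
  also have "\<dots> \<le> (\<integral>\<^sup>+ z. ennreal (dist (fst z) (snd z)) \<partial>\<pi>)"
    unfolding D_def using \<pi>1(1) by (rule emeasure_dist_ge_le_coupling_cost)
  finally show ?thesis
    by (simp add: U_def)
qed

lemma W1_open_measure_compl_gt:
  fixes K :: "('n::finite) mat set"
  assumes "compact K" "closed F" "F \<noteq> {}"
  shows "W1_open K {\<nu> \<in> Pm K. a < measure \<nu> (- F)}"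
  unfolding W1_open_def
proof (intro conjI ballI)
  fix \<mu> assume "\<mu> \<in> {\<nu> \<in> Pm K. a < measure \<nu> (- F)}"
  then have \<mu>: "\<mu> \<in> Pm K" "a < measure \<mu> (- F)"
    by auto
  obtain \<delta> where \<delta>: "0 < \<delta>" "a < measure \<mu> {x. \<delta> < infdist x F}"
    using \<mu> assms(2,3) exists_infdist_gt_measure_gt[of \<mu> F a] by (auto simp: Pm_def)
  define b where "b = measure \<mu> {x. \<delta> < infdist x F}"
  have e: "0 < (b - a) * \<delta>"
    using \<delta> by (simp add: b_def)
  show "\<exists>e>0. \<forall>\<nu>\<in>Pm K. W1 \<mu> \<nu> < e \<longrightarrow> \<nu> \<in> {\<nu> \<in> Pm K. a < measure \<nu> (- F)}"
  proof (intro exI[of _ "(b - a) * \<delta>"] conjI ballI impI e)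
    fix \<nu> assume \<nu>: "\<nu> \<in> Pm K" and "W1 \<mu> \<nu> < (b - a) * \<delta>"
    then obtain \<pi> where "\<pi> \<in> couplings \<mu> \<nu>"
      and "(\<integral>\<^sup>+ z. ennreal (dist (fst z) (snd z)) \<partial>\<pi>) < ennreal ((b - a) * \<delta>)"
      by (rule exists_coupling_cost_less[OF \<open>compact K\<close> \<mu>(1)])
    moreover have "ennreal (\<delta> * (b - measure \<nu> (- F)))
        \<le> (\<integral>\<^sup>+ z. ennreal (dist (fst z) (snd z)) \<partial>\<pi>)"
      unfolding b_def using calculation(1) by (rule measure_infdist_gt_le_coupling_cost[OF _ assms(2) \<delta>(1)])
    ultimately have "ennreal (\<delta> * (b - measure \<nu> (- F))) < ennreal ((b - a) * \<delta>)"
      by order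
    then have "\<delta> * (b - measure \<nu> (- F)) < (b - a) * \<delta>"
      using e by (cases "0 \<le> \<delta> * (b - measure \<nu> (- F))") (auto simp: ennreal_less_iff)
    then show "\<nu> \<in> {\<nu> \<in> Pm K. a < measure \<nu> (- F)}"
      using \<nu> \<delta>(1) by (simp add: algebra_simps)
  qed
qed auto

lemma borel_measurable_measure_compl:
  fixes K :: "('n::finite) mat set"
  assumes "space \<eta> = Pm K" "sets \<eta> = W1_borel_sets K" "compact K" "closed F" "F \<noteq> {}"
  shows "(\<lambda>\<nu>. measure \<nu> (- F)) \<in> borel_measurable \<eta>"
  unfolding borel_measurable_iff_greater
proof
  fix a
  show "{\<nu> \<in> space \<eta>. a < measure \<nu> (- F)} \<in> sets \<eta>"
    unfolding assms(1,2) W1_borel_sets_def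
    using W1_open_measure_compl_gt[OF assms(3-5)] by (intro sigma_sets.Basic) simp
qed

lemma AE_measure_compl_eq_0_if_barycenter:
  fixes K :: "('n::finite) mat set"
  assumes \<eta>: "space \<eta> = Pm K" "sets \<eta> = W1_borel_sets K"
    and "compact K" "closed F" "F \<noteq> {}"
    and null: "(\<integral>\<^sup>+ \<nu>. emeasure \<nu> (- F) \<partial>\<eta>) = 0"
  shows "AE \<nu> in \<eta>. measure \<nu> (- F) = 0"
proof -
  have "emeasure \<nu> (- F) = ennreal (measure \<nu> (- F))" if "\<nu> \<in> space \<eta>" for \<nu>
  proof -
    interpret prob_space \<nu>
      using that \<eta>(1) by (simp add: Pm_def)
    show ?thesis
      by (simp add: emeasure_eq_measure)
  qed
  then have "(\<integral>\<^sup>+ \<nu>. ennreal (measure \<nu> (- F)) \<partial>\<eta>) = 0"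
    using null by (simp cong: nn_integral_cong)
  then have "AE \<nu> in \<eta>. ennreal (measure \<nu> (- F)) = 0"
    using borel_measurable_measure_compl[OF assms(1-5)] by (simp add: nn_integral_0_iff_AE)
  then show ?thesis
    by (auto elim!: eventually_mono)
qed

section \<open>Measures on a Loewner chain are monotone\<close>

lemma Pmono_concentrated_on_closed_chain:
  fixes \<mu> :: "('n::finite) mat measure"
  assumes "\<mu> \<in> Pmono"
  obtains F where "closed F" "loewner_chain F" "emeasure \<mu> F = 1"
proof -
  obtain q :: "real \<Rightarrow> 'n mat" where q: "q \<in> borel_measurable borel"
    "\<And>u v. u \<in> {0..<1} \<Longrightarrow> v \<in> {0..<1} \<Longrightarrow> u \<le> v \<Longrightarrow> loewner_le (q u) (q v)"
    "\<mu> = distr (uniform_measure lborel {0..<1}) borel q"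
    using assms unfolding Pmono_def by blast
  define U where "U = uniform_measure lborel {0..<1::real}"
  interpret U: prob_space U
    unfolding U_def by (intro prob_space_uniform_measure) auto
  have "loewner_chain (q ` {0..<1})"
    unfolding loewner_chain_def
  proof (intro ballI)
    fix A B assume "A \<in> q ` {0..<1}" "B \<in> q ` {0..<1}"
    then obtain u v where "u \<in> {0..<1}" "v \<in> {0..<1}" "A = q u" "B = q v"
      by blast
    then show "loewner_le A B \<or> loewner_le B A"
      using q(2) by (cases "u \<le> v") auto
  qed
  then have "loewner_chain (closure (q ` {0..<1}))"
    by (rule loewner_chain_closure)
  moreover have "emeasure \<mu> (closure (q ` {0..<1})) = 1"
  proof -
    have "emeasure \<mu> (closure (q ` {0..<1})) = emeasure U (q -` closure (q ` {0..<1}) \<inter> space U)"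
      unfolding q(3) U_def[symmetric] using q(1) by (simp add: emeasure_distr U_def)
    moreover have "emeasure U {0..<1} \<le> emeasure U (q -` closure (q ` {0..<1}) \<inter> space U)"
      using measurable_sets[OF q(1), of "closure (q ` {0..<1})"]
      by (intro emeasure_mono) (auto simp: U_def intro: closure_subset[THEN subsetD])
    moreover have "emeasure U {0..<1} = 1"
      unfolding U_def by (intro emeasure_uniform_measure_1) auto
    ultimately show ?thesis
      using U.emeasure_le_1[of "q -` closure (q ` {0..<1}) \<inter> space U"] by simp
  qed
  ultimately show ?thesis
    using that by blast
qed

lemma (in cdf_distribution) pseudoinverse_in_closed_support:
  assumes "closed T" "measure M T = 1" "0 < \<omega>" "\<omega> < 1"
  shows "I \<omega> \<in> T"
proof (rule ccontr)
  assume "I \<omega> \<notin> T"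
  moreover have "open (- T)"
    using assms(1) by (simp add: open_Compl)
  ultimately obtain d where d: "0 < d" "ball (I \<omega>) d \<subseteq> - T"
    unfolding open_contains_ball by blast
  have "{I \<omega> - d/2 <.. I \<omega>} \<subseteq> - T"
    using d by (force simp: dist_real_def)
  then have "measure M {I \<omega> - d/2 <.. I \<omega>} \<le> measure M (- T)"
    using assms(1) by (intro finite_measure_mono) auto
  also have "measure M (- T) = 0"
    using prob_compl[of T] assms(1,2) by (simp add: Compl_eq_Diff_UNIV)
  finally have "cdf M (I \<omega>) \<le> cdf M (I \<omega> - d/2)"
    using cdf_diff_eq[of "I \<omega> - d/2" "I \<omega>"] d(1) measure_nonneg[of M "{I \<omega> - d/2 <.. I \<omega>}"]
    by simp
  moreover have "\<omega> \<le> cdf M (I \<omega>)" "cdf M (I \<omega> - d/2) < \<omega>"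
    using pseudoinverse[OF assms(3,4), of "I \<omega>"] pseudoinverse[OF assms(3,4), of "I \<omega> - d/2"] d(1)
    by auto
  ultimately show False
    by simp
qed

lemma distr_uniform_measure_Ico_eq_restrict:
  assumes "q \<in> borel \<rightarrow>\<^sub>M N"
  shows "distr (uniform_measure lborel {0..<1::real}) N q = distr (restrict_space lborel {0<..<1}) N q"
proof (rule measure_eqI)
  fix A assume "A \<in> sets (distr (uniform_measure lborel {0..<1::real}) N q)"
  then have A: "A \<in> sets N"
    by simp
  have qA: "q -` A \<in> sets lborel"
    using measurable_sets[OF assms A] by simp
  have q': "q \<in> restrict_space lborel {0<..<1} \<rightarrow>\<^sub>M N"
    using assms by (intro measurable_restrict_space1) simp
  have "emeasure (distr (uniform_measure lborel {0..<1}) N q) A = emeasure lborel ({0..<1} \<inter> q -` A)"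
    using A assms qA by (simp add: emeasure_distr divide_ennreal_def)
  also have "\<dots> = emeasure lborel (q -` A \<inter> {0<..<1})"
    using qA AE_lborel_singleton[of 0]
    by (intro emeasure_eq_AE) (auto elim!: eventually_mono)
  also have "\<dots> = emeasure (distr (restrict_space lborel {0<..<1}) N q) A"
    using A q' qA by (simp add: emeasure_distr emeasure_restrict_space space_restrict_space)
  finally show "emeasure (distr (uniform_measure lborel {0..<1}) N q) A
      = emeasure (distr (restrict_space lborel {0<..<1}) N q) A" .
qed simp

lemma quantile_representation:
  fixes M :: "real measure"
  assumes "real_distribution M" "compact T" "T \<noteq> {}" "measure M T = 1"
  obtains I :: "real \<Rightarrow> real"
  where "I \<in> borel_measurable borel" "\<And>u. I u \<in> T" "mono_on {0..<1} I"
    "distr (uniform_measure lborel {0..<1}) borel I = M"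
proof -
  interpret cdf_distribution M
    using assms(1) by (simp add: cdf_distribution_def)
  define t0 where "t0 = Inf T"
  have "bdd_below T"
    using assms(2) by (simp add: compact_imp_bounded bounded_imp_bdd_below)
  then have t0: "t0 \<in> T" "\<And>t. t \<in> T \<Longrightarrow> t0 \<le> t"
    unfolding t0_def using assms(2,3) by (auto intro: closed_contains_Inf compact_imp_closed cInf_lower)
  \<comment> \<open>The quantile function I is only meaningful on (0,1); the value min T at 0 keeps Q monotone.\<close>
  define Q where "Q u = (if u \<in> {0<..<1} then I u else t0)" for u
  have Q_in: "Q u \<in> T" for u
    using t0(1) pseudoinverse_in_closed_support[OF compact_imp_closed[OF assms(2)] assms(4)]
    by (simp add: Q_def)
  have mono: "mono_on {0..<1} Q"
  proof (rule mono_onI)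
    fix u v :: real assume uv: "u \<in> {0..<1}" "v \<in> {0..<1}" "u \<le> v"
    show "Q u \<le> Q v"
    proof (cases "u = 0")
      case True
      then show ?thesis
        using t0(2)[OF Q_in[of v]] by (simp add: Q_def)
    next
      case False
      then have "u \<in> {0<..<1}" "v \<in> {0<..<1}"
        using uv by auto
      then show ?thesis
        using mono_onD[OF mono_I _ _ uv(3)] by (simp add: Q_def)
    qed
  qed
  have Q: "Q \<in> borel_measurable borel"
    unfolding Q_def
  proof (subst measurable_If_restrict_space_iff)
    show "(\<lambda>u. I u) \<in> restrict_space borel {u. u \<in> {0<..<1::real}} \<rightarrow>\<^sub>M borel \<and>
        (\<lambda>u. t0) \<in> restrict_space borel {u. u \<notin> {0<..<1::real}} \<rightarrow>\<^sub>M borel"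
      unfolding Collect_mem_eq by (intro conjI measurable_CI measurable_const) simp
  qed simp
  have "distr (restrict_space lborel {0<..<1}) borel Q = distr (restrict_space lborel {0<..<1}) borel I"
    by (rule distr_cong) (auto simp: space_restrict_space Q_def)
  then have "distr (uniform_measure lborel {0..<1}) borel Q = M"
    using distr_uniform_measure_Ico_eq_restrict[OF Q] distr_I_eq_M by simp
  then show ?thesis
    by (rule that[OF Q Q_in mono])
qed

lemma distr_AE_id:
  assumes "sets \<nu> = sets borel" "f \<in> borel_measurable borel" "AE x in \<nu>. f x = x"
  shows "distr \<nu> borel f = \<nu>"
proof -
  have "distr \<nu> borel f = distr \<nu> borel (\<lambda>x. x)"
    using assms measurable_cong_sets[of \<nu> borel borel borel]
    by (intro distr_cong_AE) (auto simp: measurable_ident_sets)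
  then show ?thesis
    using assms(1) by (simp add: distr_id2)
qed

lemma loewner_chain_trace_inverse:
  fixes C :: "('n::finite) mat set"
  assumes "compact C" "C \<noteq> {}" "loewner_chain C"
  obtains g :: "real \<Rightarrow> 'n mat"
  where "g \<in> borel_measurable borel" "\<And>A. A \<in> C \<Longrightarrow> g (trace A) = A"
    "\<And>t. t \<in> trace ` C \<Longrightarrow> g t \<in> C"
    "\<And>s t. s \<in> trace ` C \<Longrightarrow> t \<in> trace ` C \<Longrightarrow> s \<le> t \<Longrightarrow> loewner_le (g s) (g t)"
proof -
  define T where "T = trace ` C"
  define h where "h = the_inv_into C trace"
  have inj: "inj_on trace C"
    using assms(3) by (rule inj_on_trace_loewner_chain)
  have T: "compact T" "T \<noteq> {}"
    unfolding T_def using assms(1,2) continuous_on_trace by (auto intro: compact_continuous_image)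
  have h_trace: "h (trace A) = A" if "A \<in> C" for A
    unfolding h_def using the_inv_into_f_f[OF inj that] .
  have hC: "h t \<in> C" and trace_h: "trace (h t) = t" if "t \<in> T" for t
    using that the_inv_into_into[OF inj] h_trace unfolding h_def T_def by auto
  obtain t0 where t0: "t0 \<in> T"
    using T(2) by blast
  define g where "g t = (if t \<in> T then h t else h t0)" for t
  have "g \<in> borel_measurable borel"
    unfolding g_def h_def T_def
    using continuous_on_inv_into[OF continuous_on_trace assms(1) inj] T(1)
    by (intro borel_measurable_continuous_on_if continuous_on_const) (auto simp: borel_compact T_def)
  moreover have "g (trace A) = A" if "A \<in> C" for A
    using that h_trace by (simp add: g_def T_def)
  moreover have gC: "g t \<in> C" if "t \<in> T" for t
    using that hC by (simp add: g_def)
  moreover have "loewner_le (g s) (g t)" if "s \<in> T" "t \<in> T" "s \<le> t" for s t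
    using that gC trace_h assms(3) by (intro loewner_chain_trace_le_imp_loewner_le[of C]) (auto simp: g_def)
  ultimately show ?thesis
    using that unfolding T_def by blast
qed

lemma real_distribution_distr_trace:
  fixes \<nu> :: "('n::finite) mat measure"
  assumes \<nu>: "prob_space \<nu>" "sets \<nu> = sets borel" and "compact C" "emeasure \<nu> C = 1"
  shows "real_distribution (distr \<nu> borel trace)" "measure (distr \<nu> borel trace) (trace ` C) = 1"
proof -
  interpret \<nu>: prob_space \<nu> by fact
  have trace_meas: "trace \<in> borel_measurable \<nu>"
    by (subst measurable_cong_sets[OF \<nu>(2) refl]) (rule borel_measurable_trace)
  interpret M: prob_space "distr \<nu> borel trace"
    by (rule \<nu>.prob_space_distr[OF trace_meas])
  show "real_distribution (distr \<nu> borel trace)"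
    unfolding real_distribution_def real_distribution_axioms_def
    using M.prob_space_axioms by simp
  have T: "trace ` C \<in> sets borel"
    using \<open>compact C\<close> continuous_on_trace by (auto intro: borel_compact compact_continuous_image)
  have "space \<nu> = UNIV"
    using sets_eq_imp_space_eq[OF \<nu>(2)] by simp
  then have "emeasure \<nu> C \<le> emeasure \<nu> (trace -` trace ` C \<inter> space \<nu>)"
    using measurable_sets[OF trace_meas T] by (intro emeasure_mono) auto
  then have "1 \<le> emeasure (distr \<nu> borel trace) (trace ` C)"
    using assms(4) T trace_meas by (simp add: emeasure_distr)
  then have "1 \<le> measure (distr \<nu> borel trace) (trace ` C)"
    by (simp add: M.emeasure_eq_measure)
  then show "measure (distr \<nu> borel trace) (trace ` C) = 1"
    using M.prob_le_1[of "trace ` C"] by linarith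
qed

lemma Pmono_if_concentrated_on_chain:
  fixes C :: "('n::finite) mat set"
  assumes C: "compact C" "C \<noteq> {}" "C \<subseteq> psd" "loewner_chain C"
    and \<nu>: "prob_space \<nu>" "sets \<nu> = sets borel" "emeasure \<nu> C = 1"
  shows "\<nu> \<in> Pmono"
proof -
  interpret \<nu>: prob_space \<nu> by fact
  obtain g :: "real \<Rightarrow> 'n mat" where g: "g \<in> borel_measurable borel"
    "\<And>A. A \<in> C \<Longrightarrow> g (trace A) = A" "\<And>t. t \<in> trace ` C \<Longrightarrow> g t \<in> C"
    "\<And>s t. s \<in> trace ` C \<Longrightarrow> t \<in> trace ` C \<Longrightarrow> s \<le> t \<Longrightarrow> loewner_le (g s) (g t)"
    using loewner_chain_trace_inverse[OF C(1,2,4)] by blast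
  have T: "compact (trace ` C)" "trace ` C \<noteq> {}"
    using C(1,2) continuous_on_trace by (auto intro: compact_continuous_image)
  obtain I :: "real \<Rightarrow> real" where I: "I \<in> borel_measurable borel" "\<And>u. I u \<in> trace ` C"
      "mono_on {0..<1} I" "distr (uniform_measure lborel {0..<1}) borel I = distr \<nu> borel trace"
    using real_distribution_distr_trace[OF \<nu>(1,2) C(1) \<nu>(3)]
    by (rule quantile_representation[OF _ T]) blast
  define q where "q = g \<circ> I"
  have "loewner_le (q u) (q v)" if "u \<in> {0..<1}" "v \<in> {0..<1}" "u \<le> v" for u v
    using g(4) I(2) monotone_onD[OF I(3) that] by (simp add: q_def)
  moreover have "q u \<in> psd" for u
    using g(3) I(2) C(3) by (auto simp: q_def)
  moreover have "distr (uniform_measure lborel {0..<1}) borel q = \<nu>"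
  proof -
    have I_uniform: "I \<in> borel_measurable (uniform_measure lborel {0..<1})"
      using I(1) by simp
    have trace_meas: "trace \<in> borel_measurable \<nu>"
      by (subst measurable_cong_sets[OF \<nu>(2) refl]) (rule borel_measurable_trace)
    have "distr (uniform_measure lborel {0..<1}) borel q = distr (distr \<nu> borel trace) borel g"
      using distr_distr[OF g(1) I_uniform] I(4) by (simp add: q_def)
    also have "\<dots> = distr \<nu> borel (g \<circ> trace)"
      using distr_distr[OF g(1) trace_meas] by simp
    also have "\<dots> = \<nu>"
    proof (rule distr_AE_id[OF \<nu>(2)])
      show "g \<circ> trace \<in> borel_measurable borel"
        by (rule measurable_comp[OF borel_measurable_trace g(1)])
      have "AE x in \<nu>. x \<in> C"
        using \<nu>(3) C(1) by (simp add: \<nu>.AE_in_set_eq_1 \<nu>.emeasure_eq_measure borel_compact \<nu>(2))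
      then show "AE x in \<nu>. (g \<circ> trace) x = x"
        by (rule eventually_mono) (simp add: g(2))
    qed
    finally show ?thesis .
  qed
  moreover have "q \<in> borel_measurable borel"
    using I(1) g(1) by (simp add: q_def)
  ultimately show ?thesis
    unfolding Pmono_def by blast
qed

lemma Pmono_on_concentrated_on_compact_chain:
  fixes K :: "('n::finite) mat set"
  assumes K: "compact K" "K \<subseteq> psd" and \<mu>: "\<mu> \<in> Pmono_on K"
  obtains F where "compact F" "F \<noteq> {}" "F \<subseteq> psd" "loewner_chain F" "emeasure \<mu> (- F) = 0"
proof -
  have \<mu>1: "prob_space \<mu>" "sets \<mu> = sets borel" "emeasure \<mu> K = 1"
    using \<mu> by (auto simp: Pmono_on_def Pm_def)
  interpret \<mu>: prob_space \<mu> by fact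
  have "\<mu> \<in> Pmono"
    using \<mu> by (simp add: Pmono_on_def)
  then obtain F0 where F0: "closed F0" "loewner_chain F0" "emeasure \<mu> F0 = 1"
    by (rule Pmono_concentrated_on_closed_chain)
  define F where "F = F0 \<inter> K"
  have F: "compact F" "loewner_chain F" "F \<subseteq> psd"
    unfolding F_def using F0 K by (auto intro: closed_Int_compact loewner_chain_subset)
  have "AE x in \<mu>. x \<in> F0" "AE x in \<mu>. x \<in> K"
    using F0(1,3) \<mu>1 K(1) by (simp_all add: \<mu>.AE_in_set_eq_1 \<mu>.emeasure_eq_measure borel_closed borel_compact)
  then have "AE x in \<mu>. x \<in> F"
    unfolding F_def by eventually_elim simp
  then have "emeasure \<mu> F = 1"
    using F(1) \<mu>1(2) by (simp add: \<mu>.AE_in_set_eq_1 \<mu>.emeasure_eq_measure borel_compact)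
  then have "F \<noteq> {}" "emeasure \<mu> (- F) = 0"
    using \<mu>1(2) F(1) \<mu>.prob_compl[of F]
    by (auto simp: \<mu>.emeasure_eq_measure borel_compact Compl_eq_Diff_UNIV sets_eq_imp_space_eq)
  with F show ?thesis
    using that by blast
qed

lemma AE_Pmono_on_if_barycenter:
  fixes K :: "('n::finite) mat set" and \<eta> :: "'n mat measure measure"
  assumes K: "compact K" "K \<subseteq> psd"
    and \<eta>: "space \<eta> = Pm K" "sets \<eta> = W1_borel_sets K"
    and \<mu>: "\<mu> \<in> Pmono_on K" and bar: "\<forall>A\<in>sets borel. emeasure \<mu> A = (\<integral>\<^sup>+ \<nu>. emeasure \<nu> A \<partial>\<eta>)"
  shows "AE \<nu> in \<eta>. \<nu> \<in> Pmono_on K"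
proof -
  obtain F where F: "compact F" "F \<noteq> {}" "F \<subseteq> psd" "loewner_chain F" "emeasure \<mu> (- F) = 0"
    by (rule Pmono_on_concentrated_on_compact_chain[OF K \<mu>])
  have "AE \<nu> in \<eta>. measure \<nu> (- F) = 0"
    using bar F
    by (intro AE_measure_compl_eq_0_if_barycenter[OF \<eta> K(1)]) (auto simp: compact_imp_closed)
  moreover have "AE \<nu> in \<eta>. measure \<nu> (- F) = 0 \<longrightarrow> \<nu> \<in> Pmono_on K"
  proof (rule AE_I2, rule impI)
    fix \<nu> assume \<nu>: "\<nu> \<in> space \<eta>" "measure \<nu> (- F) = 0"
    then have \<nu>1: "prob_space \<nu>" "sets \<nu> = sets borel"
      using \<eta>(1) by (auto simp: Pm_def)
    interpret \<nu>: prob_space \<nu> by fact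
    have "emeasure \<nu> F = 1"
      using \<nu>(2) \<nu>1(2) F(1) \<nu>.prob_compl[of F]
      by (simp add: \<nu>.emeasure_eq_measure borel_compact Compl_eq_Diff_UNIV sets_eq_imp_space_eq)
    then show "\<nu> \<in> Pmono_on K"
      using Pmono_if_concentrated_on_chain[OF F(1-4) \<nu>1] \<nu>(1) \<eta>(1)
      by (simp add: Pmono_on_def)
  qed
  ultimately show ?thesis
    by (rule AE_mp)
qed

theorem proposition5p10:
  fixes K :: "('n::finite) mat set"
  assumes "compact K" and "K \<subseteq> psd"
  shows "closed_convex_hull_W1 K (Pmono_on K) = Pm K
    \<and> (\<forall>\<eta> :: 'n mat measure measure.
         space \<eta> = Pm K \<and> sets \<eta> = W1_borel_sets K \<and> prob_space \<eta> \<and>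
         (\<exists>\<mu>\<in>Pmono_on K. \<forall>A\<in>sets borel.
              emeasure \<mu> A = (\<integral>\<^sup>+ \<nu>. emeasure \<nu> A \<partial>\<eta>))
         \<longrightarrow> (AE \<nu> in \<eta>. \<nu> \<in> Pmono_on K))"
proof (intro conjI allI impI)
  show "closed_convex_hull_W1 K (Pmono_on K) = Pm K"
    using assms by (rule closed_convex_hull_Pmono_on_eq_Pm)
next
  fix \<eta> :: "'n mat measure measure"
  assume "space \<eta> = Pm K \<and> sets \<eta> = W1_borel_sets K \<and> prob_space \<eta> \<and>
    (\<exists>\<mu>\<in>Pmono_on K. \<forall>A\<in>sets borel. emeasure \<mu> A = (\<integral>\<^sup>+ \<nu>. emeasure \<nu> A \<partial>\<eta>))"
  then show "AE \<nu> in \<eta>. \<nu> \<in> Pmono_on K"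
    \<comment> \<open>the conclusion holds for any measure \<eta>\<close>
    using AE_Pmono_on_if_barycenter[OF assms] by blast
qed

end
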